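(* Let $q$ be an indeterminate and work in the algebra of formal series in the noncommuting indeterminates $S_0,S_1,S_2,\dots$ over $\mathbb{C}(q)$, graded by $\deg S_k=k$. Define $g_n$ ($n\ge 0$) by $g_0=S_0$ and, for $n\ge1$, $$(q^n-1)\,g_n=\sum_{k=1}^{n} S_k\sum_{\substack{j_1+\cdots+j_{k+1}=n-k\\ j_i\ge 0}} g_{j_1}g_{j_2}\cdots g_{j_{k+1}},$$ and set $g=\sum_{n\ge0}g_n$. Then $$g=\sum_{T} m_T(q)\, S^{I(T)},\qquad m_T(q)=\prod_{v}\frac{1}{q^{\phi(v)-1}-1},$$ where $T$ runs over all reduced plane trees (including the tree consisting of a single leaf), $I(T)$ is the Polish code of $T$, the product runs over the internal vertices $v$ of $T$, and $\phi(v)$ is the number of leaves of the subtree of $T$ rooted at $v$. More precisely, for each $n\ge 0$, $g_n$ is the sum of $m_T(q)S^{I(T)}$ over the reduced plane trees $T$ with $n+1$ leaves.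
   Context: A reduced plane tree (Schröder tree) is a rooted plane (ordered) tree in which every internal vertex has at least two children; vertices without children are leaves. The Polish code $I(T)=(i_1,\dots,i_m)$ of $T$ is the sequence obtained by listing the vertices in preorder (root first, then the subtrees of the children from left to right, recursively) and recording $0$ for a leaf and $k$ for an internal vertex with $k+1$ children. For a sequence $I=(i_1,\dots,i_m)$ of nonnegative integers, $S^I=S_{i_1}S_{i_2}\cdots S_{i_m}$. The empty product $m_T(q)$ for the single-leaf tree equals $1$. *)

theory Defs
  imports "HOL-Computational_Algebra.Polynomial" "HOL-Computational_Algebra.Fraction_Field"
begin

type_synonym coef = "complex poly fract"

definition qq :: coef where
  "qq = Fract [:0, 1:] 1"

text \<open>Noncommutative formal series in S_0, S_1, ...: a series is the function
  giving the coefficient of each word (word = list of letter indices).\<close>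
type_synonym series = "nat list \<Rightarrow> coef"

definition sone :: series where
  "sone w = (if w = [] then 1 else 0)"

definition letter :: "nat \<Rightarrow> series" where
  "letter k w = (if w = [k] then 1 else 0)"

definition sprod :: "series \<Rightarrow> series \<Rightarrow> series" where
  "sprod f g w = (\<Sum>i\<le>length w. f (take i w) * g (drop i w))"

definition sprod_list :: "series list \<Rightarrow> series" where
  "sprod_list fs = foldr sprod fs sone"

text \<open>Plane trees; a leaf is Node [].\<close>
datatype ptree = Node "ptree list"

fun reduced :: "ptree \<Rightarrow> bool" where
  "reduced (Node ts) = (length ts \<noteq> 1 \<and> (\<forall>t\<in>set ts. reduced t))"

fun nleaves :: "ptree \<Rightarrow> nat" where
  "nleaves (Node ts) = (if ts = [] then 1 else sum_list (map nleaves ts))"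

fun polish :: "ptree \<Rightarrow> nat list" where
  "polish (Node ts) = (if ts = [] then 0 else length ts - 1) # concat (map polish ts)"

fun mT :: "ptree \<Rightarrow> coef" where
  "mT (Node ts) = (if ts = [] then 1
     else inverse (qq ^ (nleaves (Node ts) - 1) - 1) * prod_list (map mT ts))"

end

theory Submission
  imports Defs
begin

text \<open>Both sides satisfy the recursion, which determines \<open>g_n\<close> from \<open>g_0, ..., g_(n-1)\<close>
  because \<open>q^n \<noteq> 1\<close>. Deleting the root of a reduced tree with \<open>n + 1 \<ge> 2\<close> leaves and
  \<open>k + 1\<close> children leaves a list of \<open>k + 1\<close> reduced trees with \<open>j_1 + 1, ..., j_(k+1) + 1\<close>
  leaves, where \<open>j_1 + ... + j_(k+1) = n - k\<close>; the Polish code of the tree is \<open>k\<close> followed by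
  the codes of the subtrees, and \<open>m_T\<close> is \<open>1/(q^n - 1)\<close> times the product of their weights.
  Multiplying finite sums of words concatenates the words and multiplies the coefficients, so
  the tree sums \<open>G_n\<close> satisfy \<open>(q^n - 1) G_n\<close> = right-hand side of the recursion.\<close>

definition word_series :: "'a set \<Rightarrow> ('a \<Rightarrow> nat list) \<Rightarrow> ('a \<Rightarrow> coef) \<Rightarrow> series" where
  "word_series A code c w = (\<Sum>a\<in>A. if code a = w then c a else 0)"

lemma sum_take_drop_eq_append:
  "(\<Sum>i\<le>length w. if x = take i w \<and> y = drop i w then (c::'a::comm_monoid_add) else 0)
    = (if x @ y = w then c else 0)"
proof -
  have "(x = take i w \<and> y = drop i w) \<longleftrightarrow> (x @ y = w \<and> i = length x)" if "i \<le> length w" for i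
    using that by (auto simp: append_eq_conv_conj)
  then have "(\<Sum>i\<le>length w. if x = take i w \<and> y = drop i w then c else 0)
      = (\<Sum>i\<le>length w. if i = length x then (if x @ y = w then c else 0) else 0)"
    by (intro sum.cong) auto
  also have "\<dots> = (if x @ y = w then c else 0)"
    by (auto simp: sum.delta)
  finally show ?thesis .
qed

lemma sprod_word_series:
  "sprod (word_series A p c) (word_series B r d)
     = word_series (A \<times> B) (\<lambda>(a, b). p a @ r b) (\<lambda>(a, b). c a * d b)"
proof
  fix w
  have "sprod (word_series A p c) (word_series B r d) w =
     (\<Sum>i\<le>length w. \<Sum>a\<in>A. \<Sum>b\<in>B. if p a = take i w \<and> r b = drop i w then c a * d b else 0)"
    unfolding sprod_def word_series_def sum_product by (intro sum.cong refl) auto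
  also have "\<dots> = (\<Sum>a\<in>A. \<Sum>b\<in>B. \<Sum>i\<le>length w.
      if p a = take i w \<and> r b = drop i w then c a * d b else 0)"
    by (subst sum.swap) (subst sum.swap, rule refl)
  also have "\<dots> = (\<Sum>a\<in>A. \<Sum>b\<in>B. if p a @ r b = w then c a * d b else 0)"
    by (simp only: sum_take_drop_eq_append)
  also have "\<dots> = word_series (A \<times> B) (\<lambda>(a, b). p a @ r b) (\<lambda>(a, b). c a * d b) w"
    unfolding word_series_def sum.cartesian_product by (auto intro!: sum.cong)
  finally show "sprod (word_series A p c) (word_series B r d) w
      = word_series (A \<times> B) (\<lambda>(a, b). p a @ r b) (\<lambda>(a, b). c a * d b) w" .
qed

lemma word_series_reindex:
  "inj_on h X \<Longrightarrow> word_series (h ` X) p c = word_series X (p \<circ> h) (c \<circ> h)"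
  unfolding word_series_def comp_def by (rule ext) (simp add: sum.reindex)

lemma word_series_cong:
  "A = B \<Longrightarrow> (\<And>a. a \<in> B \<Longrightarrow> p a = p' a) \<Longrightarrow> (\<And>a. a \<in> B \<Longrightarrow> c a = c' a)
    \<Longrightarrow> word_series A p c = word_series B p' c'"
  unfolding word_series_def by (rule ext) (intro sum.cong; simp)

lemma sum_word_series_UN_disjoint:
  assumes "finite I" "\<And>i. i \<in> I \<Longrightarrow> finite (A i)"
    and "\<And>i j. i \<in> I \<Longrightarrow> j \<in> I \<Longrightarrow> i \<noteq> j \<Longrightarrow> A i \<inter> A j = {}"
  shows "(\<Sum>i\<in>I. word_series (A i) p c w) = word_series (\<Union>i\<in>I. A i) p c w"
  unfolding word_series_def using assms by (subst sum.UNION_disjoint) auto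

lemma mult_word_series:
  "c0 * word_series A p c w = word_series A p (\<lambda>a. c0 * c a) w"
  unfolding word_series_def sum_distrib_left by (intro sum.cong) auto

lemma sprod_letter_word_series:
  "sprod (letter k) (word_series A p c) = word_series A (\<lambda>a. k # p a) c"
proof -
  have "letter k = word_series {()} (\<lambda>_. [k]) (\<lambda>_. 1)"
    by (rule ext) (auto simp: letter_def word_series_def)
  then have "sprod (letter k) (word_series A p c)
      = word_series ((\<lambda>a. ((), a)) ` A) (\<lambda>(_, a). k # p a) (\<lambda>(_, a). c a)"
    by (simp add: sprod_word_series) (rule word_series_cong; auto)
  then show ?thesis
    by (simp add: word_series_reindex inj_on_def comp_def)
qed

lemma set_Cons_eq_image: "set_Cons A B = (\<lambda>(a, b). a # b) ` (A \<times> B)"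
  unfolding set_Cons_def by auto

lemma sprod_list_word_series:
  "sprod_list (map (\<lambda>i. word_series (A i) p c) is)
     = word_series (listset (map A is)) (\<lambda>xs. concat (map p xs)) (\<lambda>xs. prod_list (map c xs))"
proof (induction "is")
  case Nil
  show ?case
    by (auto simp: sprod_list_def sone_def word_series_def)
next
  case (Cons i "is")
  have "sprod_list (map (\<lambda>i. word_series (A i) p c) (i # is))
      = word_series (A i \<times> listset (map A is))
          (\<lambda>(a, xs). p a @ concat (map p xs)) (\<lambda>(a, xs). c a * prod_list (map c xs))"
    using Cons by (simp add: sprod_list_def sprod_word_series)
  also have "\<dots> = word_series ((\<lambda>(a, xs). a # xs) ` (A i \<times> listset (map A is)))
      (\<lambda>xs. concat (map p xs)) (\<lambda>xs. prod_list (map c xs))"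
    by (subst word_series_reindex) (auto simp: inj_on_def comp_def split_def)
  finally show ?case
    by (simp add: set_Cons_eq_image)
qed

lemma finite_listset: "(\<And>A. A \<in> set As \<Longrightarrow> finite A) \<Longrightarrow> finite (listset As)"
  by (induction As) (auto simp: set_Cons_eq_image)

lemma nleaves_pos: "0 < nleaves T"
proof (induction T)
  case (Node ts)
  show ?case
  proof (cases ts)
    case (Cons t ts')
    then have "0 < nleaves t" using Node by simp
    then show ?thesis using Cons by simp
  qed simp
qed

lemma length_le_sum_nleaves: "length ts \<le> sum_list (map nleaves ts)"
proof (induction ts)
  case (Cons t ts)
  then show ?case using nleaves_pos[of t] by (simp del: nleaves.simps)
qed simp

lemma sum_list_nleaves_minus_1:
  "sum_list (map (\<lambda>t. nleaves t - 1) ts) = sum_list (map nleaves ts) - length ts"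
proof (induction ts)
  case (Cons t ts)
  then show ?case
    using nleaves_pos[of t] length_le_sum_nleaves[of ts] by (simp del: nleaves.simps)
qed simp

definition reduced_trees :: "nat \<Rightarrow> ptree set" where
  "reduced_trees m = {T. reduced T \<and> nleaves T = m}"

definition reduced_forests :: "nat \<Rightarrow> nat \<Rightarrow> ptree list set" where
  "reduced_forests m l = {ts. length ts = l \<and> (\<forall>t\<in>set ts. reduced t) \<and> sum_list (map nleaves ts) = m}"

definition weak_compositions :: "nat \<Rightarrow> nat \<Rightarrow> nat list set" where
  "weak_compositions m l = {js. length js = l \<and> sum_list js = m}"

lemma reduced_trees_Suc_0: "reduced_trees (Suc 0) = {Node []}"
proof -
  have "T = Node []" if "reduced T" "nleaves T = 1" for T
  proof (cases T)
    case (Node ts)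
    show ?thesis
    proof (rule ccontr)
      assume "T \<noteq> Node []"
      then have "ts \<noteq> []" using Node by simp
      then have "2 \<le> length ts" using that(1) Node by (cases ts) (auto simp: Suc_le_eq)
      then show False using that(2) Node \<open>ts \<noteq> []\<close> length_le_sum_nleaves[of ts] by simp
    qed
  qed
  then show ?thesis unfolding reduced_trees_def by auto
qed

lemma reduced_trees_Node:
  assumes "1 \<le> n"
  shows "reduced_trees (n + 1) = Node ` (\<Union>k\<in>{1..n}. reduced_forests (n + 1) (k + 1))"
proof (intro equalityI subsetI)
  fix T assume "T \<in> reduced_trees (n + 1)"
  moreover obtain ts where T: "T = Node ts" by (cases T)
  ultimately have red: "reduced (Node ts)" and leaves: "nleaves (Node ts) = n + 1"
    unfolding reduced_trees_def by auto
  then have "ts \<noteq> []" using assms by auto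
  then have "2 \<le> length ts" using red by (cases ts) (auto simp: Suc_le_eq)
  moreover have "length ts \<le> n + 1" using leaves length_le_sum_nleaves[of ts] \<open>ts \<noteq> []\<close> by simp
  ultimately have "ts \<in> reduced_forests (n + 1) ((length ts - 1) + 1)" "length ts - 1 \<in> {1..n}"
    using red leaves \<open>ts \<noteq> []\<close> unfolding reduced_forests_def by auto
  then show "T \<in> Node ` (\<Union>k\<in>{1..n}. reduced_forests (n + 1) (k + 1))" using T by blast
qed (auto simp: reduced_trees_def reduced_forests_def)

lemma listset_reduced_trees_iff:
  "ts \<in> listset (map (\<lambda>j. reduced_trees (j + 1)) js)
    \<longleftrightarrow> (\<forall>t\<in>set ts. reduced t) \<and> js = map (\<lambda>t. nleaves t - 1) ts"
proof (induction js arbitrary: ts)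
  case (Cons j js)
  have "t \<in> reduced_trees (j + 1) \<longleftrightarrow> reduced t \<and> j = nleaves t - 1" for t
    using nleaves_pos[of t] by (auto simp: reduced_trees_def simp del: nleaves.simps)
  with Cons show ?case
    by (cases ts) (auto simp: set_Cons_def simp del: nleaves.simps)
qed auto

lemma reduced_forests_eq_UN_listset:
  "reduced_forests (m + l) l
     = (\<Union>js\<in>weak_compositions m l. listset (map (\<lambda>j. reduced_trees (j + 1)) js))"
proof -
  have "ts \<in> reduced_forests (m + l) l \<longleftrightarrow>
      (\<forall>t\<in>set ts. reduced t) \<and> map (\<lambda>t. nleaves t - 1) ts \<in> weak_compositions m l" for ts
    using length_le_sum_nleaves[of ts] sum_list_nleaves_minus_1[of ts]
    by (auto simp: reduced_forests_def weak_compositions_def)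
  then show ?thesis
    unfolding set_eq_iff UN_iff listset_reduced_trees_iff by blast
qed

lemma finite_weak_compositions: "finite (weak_compositions m l)"
proof (rule finite_subset)
  show "weak_compositions m l \<subseteq> {js. set js \<subseteq> {0..m} \<and> length js = l}"
    unfolding weak_compositions_def using member_le_sum_list by fastforce
qed (simp add: finite_lists_length_eq)

lemma finite_reduced_forests_if_finite_trees:
  assumes "\<And>j. j \<le> m - l \<Longrightarrow> finite (reduced_trees (j + 1))"
  shows "finite (reduced_forests m l)"
proof (cases "l \<le> m")
  case True
  then have "reduced_forests m l = reduced_forests ((m - l) + l) l" by simp
  also have "\<dots> = (\<Union>js\<in>weak_compositions (m - l) l.
      listset (map (\<lambda>j. reduced_trees (j + 1)) js))"
    by (rule reduced_forests_eq_UN_listset)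
  finally show ?thesis
  proof (simp only:, intro finite_UN_I finite_weak_compositions finite_listset)
    fix js A assume "js \<in> weak_compositions (m - l) l"
      and "A \<in> set (map (\<lambda>j. reduced_trees (j + 1)) js)"
    then obtain j where "A = reduced_trees (j + 1)" "j \<le> m - l"
      unfolding weak_compositions_def using member_le_sum_list by fastforce
    then show "finite A" using assms by blast
  qed
next
  case False
  then have "reduced_forests m l = {}"
    using length_le_sum_nleaves by (fastforce simp: reduced_forests_def)
  then show ?thesis by simp
qed

lemma finite_reduced_trees: "finite (reduced_trees m)"
proof (induction m rule: less_induct)
  case (less m)
  consider "m = 0" | "m = 1" | n where "1 \<le> n" "m = n + 1"
    by (cases m; cases "m - 1") auto
  then show ?case
  proof cases
    case 1
    have "reduced_trees 0 = {}"
      by (simp add: reduced_trees_def nleaves_pos)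
    with 1 show ?thesis by simp
  next
    case 2
    then show ?thesis using reduced_trees_Suc_0 by simp
  next
    case 3
    have "finite (reduced_forests (n + 1) (k + 1))" if "k \<in> {1..n}" for k
      using that 3 by (intro finite_reduced_forests_if_finite_trees less) auto
    then show ?thesis
      unfolding \<open>m = n + 1\<close> reduced_trees_Node[OF \<open>1 \<le> n\<close>] by blast
  qed
qed

corollary finite_reduced_forests: "finite (reduced_forests m l)"
  by (intro finite_reduced_forests_if_finite_trees finite_reduced_trees)

lemma qq_power_neq_1: "n \<noteq> 0 \<Longrightarrow> qq ^ n \<noteq> 1"
proof -
  assume "n \<noteq> 0"
  have "qq ^ n = Fract ([:0, 1:] ^ n) 1"
    unfolding qq_def by (induction n) (simp_all add: One_fract_def)
  moreover have "degree (([:0, 1:] :: complex poly) ^ n) = n"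
    by (simp add: degree_power_eq)
  then have "([:0, 1:] :: complex poly) ^ n \<noteq> 1" using \<open>n \<noteq> 0\<close> by auto
  ultimately show ?thesis by (simp add: One_fract_def eq_fract)
qed

definition tree_series :: "nat \<Rightarrow> series" where
  "tree_series n = word_series (reduced_trees (n + 1)) polish mT"

definition recursion_rhs :: "(nat \<Rightarrow> series) \<Rightarrow> nat \<Rightarrow> series" where
  "recursion_rhs g n w =
     (\<Sum>k = 1..n. sprod (letter k)
        (\<lambda>u. \<Sum>js \<in> {js. length js = k + 1 \<and> sum_list js = n - k}. sprod_list (map g js) u) w)"

lemma recursion_rhs_cong:
  assumes "\<And>j. j < n \<Longrightarrow> g j = h j"
  shows "recursion_rhs g n = recursion_rhs h n"
  unfolding recursion_rhs_def
proof (intro ext sum.cong refl arg_cong[where f = "\<lambda>f. sprod _ f _"])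
  fix w k u js
  assume k: "k \<in> {1..n}" and js: "js \<in> {js. length js = k + 1 \<and> sum_list js = n - k}"
  have maps: "map g js = map h js"
  proof (rule map_cong[OF refl])
    fix j assume "j \<in> set js"
    then have "j \<le> n - k" using js member_le_sum_list by fastforce
    with k show "g j = h j" by (auto intro: assms)
  qed
  show "sprod_list (map g js) u = sprod_list (map h js) u" unfolding maps ..
qed

lemma tree_series_0: "tree_series 0 = letter 0"
  by (rule ext) (auto simp: tree_series_def word_series_def reduced_trees_Suc_0 letter_def)

definition forest_series :: "nat \<Rightarrow> nat \<Rightarrow> series" where
  "forest_series m l = word_series (reduced_forests m l) (\<lambda>ts. concat (map polish ts))
     (\<lambda>ts. prod_list (map mT ts))"

lemma sum_sprod_list_tree_series:
  "(\<Sum>js\<in>weak_compositions m l. sprod_list (map tree_series js) w) = forest_series (m + l) l w"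
proof -
  let ?A = "\<lambda>js. listset (map (\<lambda>j. reduced_trees (j + 1)) js)"
  have "(\<Sum>js\<in>weak_compositions m l. sprod_list (map tree_series js) w)
      = (\<Sum>js\<in>weak_compositions m l.
           word_series (?A js) (\<lambda>ts. concat (map polish ts)) (\<lambda>ts. prod_list (map mT ts)) w)"
    unfolding tree_series_def sprod_list_word_series by simp
  also have "\<dots> = word_series (\<Union>js\<in>weak_compositions m l. ?A js)
      (\<lambda>ts. concat (map polish ts)) (\<lambda>ts. prod_list (map mT ts)) w"
  proof (rule sum_word_series_UN_disjoint)
    show "finite (weak_compositions m l)" by (rule finite_weak_compositions)
    show "finite (?A js)" for js by (rule finite_listset) (auto simp: finite_reduced_trees)
    show "?A js \<inter> ?A js' = {}" if "js \<noteq> js'" for js js'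
      using that unfolding disjoint_iff listset_reduced_trees_iff by auto
  qed
  finally show ?thesis
    by (simp only: forest_series_def reduced_forests_eq_UN_listset)
qed

lemma sprod_letter_forest_series:
  assumes "1 \<le> n"
  shows "sprod (letter k) (forest_series (n + 1) (k + 1))
    = word_series (reduced_forests (n + 1) (k + 1)) (polish \<circ> Node)
        (\<lambda>ts. (qq ^ n - 1) * mT (Node ts))"
  unfolding forest_series_def sprod_letter_word_series
proof (rule word_series_cong[OF refl])
  fix ts assume "ts \<in> reduced_forests (n + 1) (k + 1)"
  then have ts: "ts \<noteq> []" "length ts = k + 1" "sum_list (map nleaves ts) = n + 1"
    by (auto simp: reduced_forests_def)
  then show "k # concat (map polish ts) = (polish \<circ> Node) ts"
    by simp
  have "qq ^ n - 1 \<noteq> 0" using qq_power_neq_1[of n] assms by simp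
  with ts show "prod_list (map mT ts) = (qq ^ n - 1) * mT (Node ts)"
    by simp
qed

lemma tree_series_recursion:
  assumes "1 \<le> n"
  shows "(qq ^ n - 1) * tree_series n w = recursion_rhs tree_series n w"
proof -
  let ?F = "\<lambda>k. reduced_forests (n + 1) (k + 1)"
  have "recursion_rhs tree_series n w
      = (\<Sum>k = 1..n. sprod (letter k) (forest_series (n + 1) (k + 1)) w)"
    unfolding recursion_rhs_def
  proof (intro sum.cong refl arg_cong[where f = "\<lambda>f. sprod _ f _"] ext)
    fix k u assume "k \<in> {1..n}"
    then have "n - k + (k + 1) = n + 1" by simp
    then show "(\<Sum>js \<in> {js. length js = k + 1 \<and> sum_list js = n - k}.
        sprod_list (map tree_series js) u) = forest_series (n + 1) (k + 1) u"
      using sum_sprod_list_tree_series[where m = "n - k" and l = "k + 1" and w = u]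
      by (simp add: weak_compositions_def)
  qed
  also have "\<dots> = (\<Sum>k = 1..n. word_series (?F k) (polish \<circ> Node)
      (\<lambda>ts. (qq ^ n - 1) * mT (Node ts)) w)"
    by (simp only: sprod_letter_forest_series[OF assms])
  also have "\<dots> = word_series (\<Union>k\<in>{1..n}. ?F k) (polish \<circ> Node)
      (\<lambda>ts. (qq ^ n - 1) * mT (Node ts)) w"
  proof (rule sum_word_series_UN_disjoint)
    show "?F k \<inter> ?F k' = {}" if "k \<noteq> k'" for k k'
      using that unfolding disjoint_iff reduced_forests_def by auto
  qed (simp_all add: finite_reduced_forests)
  also have "\<dots> = word_series (Node ` (\<Union>k\<in>{1..n}. ?F k)) polish
      (\<lambda>T. (qq ^ n - 1) * mT T) w"
    by (subst word_series_reindex) (auto simp: inj_on_def comp_def)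
  also have "\<dots> = (qq ^ n - 1) * tree_series n w"
    unfolding tree_series_def reduced_trees_Node[OF assms] mult_word_series ..
  finally show ?thesis ..
qed

theorem mainTheorem1:
  fixes g :: "nat \<Rightarrow> series"
  assumes g0: "g 0 = letter 0"
    and grec: "\<And>n w. n \<ge> 1 \<Longrightarrow>
      (qq ^ n - 1) * g n w =
      (\<Sum>k = 1..n. sprod (letter k)
         (\<lambda>u. \<Sum>js \<in> {js. length js = k + 1 \<and> sum_list js = n - k}.
                sprod_list (map g js) u) w)"
  shows "\<forall>n w. g n w =
           (\<Sum>T \<in> {T. reduced T \<and> nleaves T = n + 1}.
              (if polish T = w then mT T else 0))"
proof -
  have "g n = tree_series n" for n
  proof (induction n rule: less_induct)
    case (less n)
    show ?case
    proof (cases "n = 0")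
      case True
      then show ?thesis using g0 tree_series_0 by simp
    next
      case False
      then have "1 \<le> n" by simp
      show ?thesis
      proof
        fix w
        have "(qq ^ n - 1) * g n w = recursion_rhs g n w"
          using grec[OF \<open>1 \<le> n\<close>] by (simp add: recursion_rhs_def)
        also have "\<dots> = (qq ^ n - 1) * tree_series n w"
          using recursion_rhs_cong[OF less] tree_series_recursion[OF \<open>1 \<le> n\<close>] by simp
        finally show "g n w = tree_series n w"
          using qq_power_neq_1[OF False] by simp
      qed
    qed
  qed
  then show ?thesis
    by (simp add: tree_series_def word_series_def reduced_trees_def)
qed

end
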